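(* Let $X$ be $\mathbf{S}^2\times\mathbb{R}$ or $\mathbf{H}^2\times\mathbb{R}$ in the projective model described in the context, and let $P=(1,x,y,z)$ with $x,y,z\in\mathbb{R}$ and $x^2+y^2+z^2>0$ in $\mathbf{S}^2\times\mathbb{R}$, respectively $x^2-y^2-z^2>0$, $x>0$ in $\mathbf{H}^2\times\mathbb{R}$. Then the translation curve drawn from $E_0=(1,1,0,0)$ to $P$ has at $E_0$ the tangent vector \[ \tau\cdot\mathbf{t}_P=\left(\tfrac12\ln\big(x^2\pm(y^2+z^2)\big),\ \frac{y\,\mathrm{arcC}\Big(\frac{x}{\sqrt{x^2\pm(y^2+z^2)}}\Big)}{\sqrt{y^2+z^2}},\ \frac{z\,\mathrm{arcC}\Big(\frac{x}{\sqrt{x^2\pm(y^2+z^2)}}\Big)}{\sqrt{y^2+z^2}}\right), \] where $\pm$ is $+$ and $\mathrm{arcC}=\arccos$ for $\mathbf{S}^2\times\mathbb{R}$, $\pm$ is $-$ and $\mathrm{arcC}=\mathrm{arccosh}$ for $\mathbf{H}^2\times\mathbb{R}$, $\mathbf{t}_P$ is the unit initial tangent vector and $\tau$ is the translation distance of $P$ and $E_0$.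
   Context: Points are written in homogeneous coordinates $(1,x,y,z)$; $\mathbf{S}^2\times\mathbb{R}$ is the set of such points with $x^2+y^2+z^2>0$ and $\mathbf{H}^2\times\mathbb{R}$ the set with $x^2-y^2-z^2>0$, $x>0$. Let $S,C$ denote $\sin,\cos$ in $\mathbf{S}^2\times\mathbb{R}$ and $\sinh,\cosh$ in $\mathbf{H}^2\times\mathbb{R}$. The translation curves (which coincide with geodesics) starting at $E_0=(1,1,0,0)$ are, with arc-length $\tau\ge0$ and parameters $-\pi<u\le\pi$, $-\pi/2\le v\le\pi/2$: $x(\tau)=e^{\tau\sin v}C(\tau\cos v)$, $y(\tau)=e^{\tau\sin v}S(\tau\cos v)\cos u$, $z(\tau)=e^{\tau\sin v}S(\tau\cos v)\sin u$. Their unit tangent vector at $E_0$ is $\mathbf{t}=(\sin v,\cos v\cos u,\cos v\sin u)$. *)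

theory Defs
  imports Complex_Main
begin

text \<open>The two geometries S^2 x R and H^2 x R.  A point (1,x,y,z) in homogeneous
coordinates is represented by the affine triple (x,y,z).\<close>

datatype geom = S2R | H2R

definition in_X :: "geom \<Rightarrow> real \<times> real \<times> real \<Rightarrow> bool" where
  "in_X X p = (case p of (x,y,z) \<Rightarrow>
     (case X of S2R \<Rightarrow> x^2 + y^2 + z^2 > 0
              | H2R \<Rightarrow> x^2 - y^2 - z^2 > 0 \<and> x > 0))"

definition S_fun :: "geom \<Rightarrow> real \<Rightarrow> real" where
  "S_fun X = (case X of S2R \<Rightarrow> sin | H2R \<Rightarrow> sinh)"

definition C_fun :: "geom \<Rightarrow> real \<Rightarrow> real" where
  "C_fun X = (case X of S2R \<Rightarrow> cos | H2R \<Rightarrow> cosh)"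

definition arcC :: "geom \<Rightarrow> real \<Rightarrow> real" where
  "arcC X = (case X of S2R \<Rightarrow> arccos | H2R \<Rightarrow> arcosh)"

definition pm :: "geom \<Rightarrow> real" where
  "pm X = (case X of S2R \<Rightarrow> 1 | H2R \<Rightarrow> -1)"

text \<open>Point at arc-length tau on the translation curve from E0=(1,1,0,0) with parameters u, v.\<close>
definition tcurve :: "geom \<Rightarrow> real \<Rightarrow> real \<Rightarrow> real \<Rightarrow> real \<times> real \<times> real" where
  "tcurve X tau u v =
     (exp (tau * sin v) * C_fun X (tau * cos v),
      exp (tau * sin v) * S_fun X (tau * cos v) * cos u,
      exp (tau * sin v) * S_fun X (tau * cos v) * sin u)"

definition admissible_params :: "real \<Rightarrow> real \<Rightarrow> real \<Rightarrow> bool" where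
  "admissible_params tau u v \<longleftrightarrow>
     tau \<ge> 0 \<and> -pi < u \<and> u \<le> pi \<and> -pi/2 \<le> v \<and> v \<le> pi/2"

definition unit_tangent :: "real \<Rightarrow> real \<Rightarrow> real \<times> real \<times> real" where
  "unit_tangent u v = (sin v, cos v * cos u, cos v * sin u)"

text \<open>(tau,u,v) describe THE translation curve from E0 to P: it reaches P at arc-length tau,
and tau is minimal among all translation curves from E0 reaching P, i.e. tau is the
translation distance of E0 and P.\<close>
definition translation_curve_to :: "geom \<Rightarrow> real \<times> real \<times> real \<Rightarrow> real \<Rightarrow> real \<Rightarrow> real \<Rightarrow> bool" where
  "translation_curve_to X P tau u v \<longleftrightarrow>
     admissible_params tau u v \<and> tcurve X tau u v = P \<and>
     (\<forall>tau' u' v'. admissible_params tau' u' v' \<and> tcurve X tau' u' v' = P \<longrightarrow> tau \<le> tau')"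

end

theory Submission
  imports Defs
begin

text \<open>Write \<open>a = \<tau> sin v\<close> and \<open>b = \<tau> cos v \<ge> 0\<close>, so that \<open>P = e\<^sup>a (C b, S b cos u, S b sin u)\<close>.
  Since \<open>C\<^sup>2 \<plusminus> S\<^sup>2 = 1\<close>, the quantity \<open>x\<^sup>2 \<plusminus> (y\<^sup>2 + z\<^sup>2)\<close> equals \<open>e\<^sup>2\<^sup>a\<close>, which gives the first
  component, and \<open>x / e\<^sup>a = C b\<close>, so \<open>arcC\<close> recovers \<open>b\<close> provided \<open>b\<close> lies in the range of
  \<open>arcC\<close>. In \<open>H\<^sup>2\<times>\<real>\<close> this is just \<open>b \<ge> 0\<close>. In \<open>S\<^sup>2\<times>\<real>\<close> it is \<open>b \<le> \<pi>\<close>, and here the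
  minimality of \<open>\<tau>\<close> is needed: replacing \<open>b\<close> by \<open>arccos (cos b)\<close> (and \<open>u\<close> by \<open>u \<plusminus> \<pi>\<close> if
  \<open>sin b < 0\<close>) reaches the same point with \<open>\<tau>\<^sup>2 = a\<^sup>2 + b\<^sup>2\<close> not increased.\<close>

lemma polar_angle_right_half_plane:
  fixes a b :: real
  assumes "0 \<le> b"
  obtains v where "-pi/2 \<le> v" "v \<le> pi/2"
    "sqrt (a\<^sup>2 + b\<^sup>2) * sin v = a" "sqrt (a\<^sup>2 + b\<^sup>2) * cos v = b"
proof (cases "a\<^sup>2 + b\<^sup>2 = 0")
  case True
  then have "a = 0" "b = 0" by (auto simp: add_nonneg_eq_0_iff)
  then show ?thesis by (intro that[of 0]) auto
next
  case False
  define r where "r = sqrt (a\<^sup>2 + b\<^sup>2)"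
  have "a\<^sup>2 + b\<^sup>2 > 0" using False by (simp add: less_le)
  then have r_pos: "r > 0" unfolding r_def by (rule real_sqrt_gt_zero)
  have "r\<^sup>2 = a\<^sup>2 + b\<^sup>2" by (simp add: r_def)
  then have "(a / r)\<^sup>2 + (b / r)\<^sup>2 = 1"
    using r_pos False by (simp add: power_divide add_divide_distrib[symmetric])
  then obtain \<theta> where \<theta>: "0 \<le> \<theta>" "\<theta> \<le> pi" "a / r = cos \<theta>" "b / r = sin \<theta>"
    using sincos_total_pi[of "b / r" "a / r"] assms r_pos by auto
  show ?thesis
  proof (rule that[of "pi/2 - \<theta>"])
    show "sqrt (a\<^sup>2 + b\<^sup>2) * sin (pi/2 - \<theta>) = a" "sqrt (a\<^sup>2 + b\<^sup>2) * cos (pi/2 - \<theta>) = b"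
      unfolding r_def[symmetric] using \<theta> r_pos by (simp_all add: sin_diff cos_diff divide_eq_eq)
  qed (use \<theta> in auto)
qed

lemma sphere_polar_angle_in_0_pi:
  fixes b u :: real
  assumes "-pi < u" "u \<le> pi"
  obtains b' u' where "0 \<le> b'" "b' \<le> pi" "-pi < u'" "u' \<le> pi" "cos b' = cos b"
    "sin b' * cos u' = sin b * cos u" "sin b' * sin u' = sin b * sin u"
proof -
  define b' where "b' = arccos (cos b)"
  define u' where "u' = (if sin b \<ge> 0 then u else if u \<le> 0 then u + pi else u - pi)"
  have "sin b' = \<bar>sin b\<bar>"
    by (simp add: b'_def sin_arccos_abs flip: sin_squared_eq)
  then have "sin b' * cos u' = sin b * cos u" "sin b' * sin u' = sin b * sin u"
    by (auto simp: u'_def)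
  moreover have "0 \<le> b'" "b' \<le> pi" "cos b' = cos b"
    by (simp_all add: b'_def arccos_lbound arccos_ubound)
  moreover have "-pi < u'" "u' \<le> pi" using assms by (auto simp: u'_def)
  ultimately show ?thesis using that by blast
qed

lemma C_fun_squared_pm_S_fun_squared: "(C_fun X b)\<^sup>2 + pm X * (S_fun X b)\<^sup>2 = 1"
  by (cases X) (simp_all add: C_fun_def S_fun_def pm_def cosh_square_eq)

lemma arcC_C_fun:
  assumes "0 \<le> b" "X = S2R \<Longrightarrow> b \<le> pi"
  shows "arcC X (C_fun X b) = b"
  using assms by (cases X) (simp_all add: arcC_def C_fun_def arccos_cos arcosh_cosh_real)

lemma S_fun_nonneg:
  assumes "0 \<le> b" "X = S2R \<Longrightarrow> b \<le> pi"
  shows "0 \<le> S_fun X b"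
  using assms by (cases X) (simp_all add: S_fun_def sin_ge_zero)

lemma admissible_params_cos_nonneg:
  assumes "admissible_params tau u v"
  shows "0 \<le> tau * cos v"
proof -
  have "0 \<le> cos v" using assms by (intro cos_ge_zero) (auto simp: admissible_params_def)
  then show ?thesis using assms by (simp add: admissible_params_def)
qed

lemma tcurve_sum_squares:
  assumes "tcurve X tau u v = (x, y, z)"
  shows "y\<^sup>2 + z\<^sup>2 = (exp (tau * sin v) * S_fun X (tau * cos v))\<^sup>2"
proof -
  have "y = exp (tau * sin v) * S_fun X (tau * cos v) * cos u"
    and "z = exp (tau * sin v) * S_fun X (tau * cos v) * sin u"
    using assms by (auto simp: tcurve_def)
  then have "y\<^sup>2 + z\<^sup>2 = (exp (tau * sin v) * S_fun X (tau * cos v))\<^sup>2 * ((cos u)\<^sup>2 + (sin u)\<^sup>2)"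
    by algebra
  then show ?thesis by simp
qed

lemma tcurve_quadratic_form:
  assumes "tcurve X tau u v = (x, y, z)"
  shows "x\<^sup>2 + pm X * (y\<^sup>2 + z\<^sup>2) = (exp (tau * sin v))\<^sup>2"
proof -
  have "x\<^sup>2 + pm X * (y\<^sup>2 + z\<^sup>2) = (exp (tau * sin v))\<^sup>2 *
      ((C_fun X (tau * cos v))\<^sup>2 + pm X * (S_fun X (tau * cos v))\<^sup>2)"
    using assms tcurve_sum_squares[OF assms] unfolding tcurve_def
    by (auto simp: power_mult_distrib algebra_simps)
  then show ?thesis by (simp only: C_fun_squared_pm_S_fun_squared mult_1_right)
qed

lemma translation_curve_S2R_angle_le_pi:
  assumes "translation_curve_to S2R P tau u v"
  shows "tau * cos v \<le> pi"
proof -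
  define a where "a = tau * sin v"
  define b where "b = tau * cos v"
  have adm: "admissible_params tau u v" and reach: "tcurve S2R tau u v = P"
    and shortest: "\<And>tau' u' v'. admissible_params tau' u' v' \<Longrightarrow> tcurve S2R tau' u' v' = P \<Longrightarrow> tau \<le> tau'"
    using assms unfolding translation_curve_to_def by blast+
  have "0 \<le> b" "0 \<le> tau" "-pi < u" "u \<le> pi"
    using adm admissible_params_cos_nonneg by (auto simp: b_def admissible_params_def)
  obtain b' u' where b': "0 \<le> b'" "b' \<le> pi" "-pi < u'" "u' \<le> pi" "cos b' = cos b"
      "sin b' * cos u' = sin b * cos u" "sin b' * sin u' = sin b * sin u"
    using sphere_polar_angle_in_0_pi \<open>-pi < u\<close> \<open>u \<le> pi\<close> by blast
  obtain v' where v': "-pi/2 \<le> v'" "v' \<le> pi/2"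
      "sqrt (a\<^sup>2 + b'\<^sup>2) * sin v' = a" "sqrt (a\<^sup>2 + b'\<^sup>2) * cos v' = b'"
    using polar_angle_right_half_plane \<open>0 \<le> b'\<close> by blast
  have "admissible_params (sqrt (a\<^sup>2 + b'\<^sup>2)) u' v'"
    using b' v' by (simp add: admissible_params_def)
  moreover have "tcurve S2R (sqrt (a\<^sup>2 + b'\<^sup>2)) u' v' = P"
    using reach b' v' by (simp add: tcurve_def C_fun_def S_fun_def mult.assoc a_def b_def)
  ultimately have "tau \<le> sqrt (a\<^sup>2 + b'\<^sup>2)" by (rule shortest)
  then have "tau\<^sup>2 \<le> (sqrt (a\<^sup>2 + b'\<^sup>2))\<^sup>2" using \<open>0 \<le> tau\<close> by (rule power_mono)
  then have "tau\<^sup>2 \<le> a\<^sup>2 + b'\<^sup>2" by simp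
  moreover have "tau\<^sup>2 = a\<^sup>2 + b\<^sup>2"
    by (simp add: a_def b_def power_mult_distrib flip: distrib_left)
  ultimately have "b \<le> b'" using \<open>0 \<le> b'\<close> by (simp add: power2_le_iff_abs_le)
  with b' show ?thesis by (simp add: b_def)
qed

theorem lemma4p9:
  fixes X :: geom and x y z tau u v :: real
  assumes "in_X X (x, y, z)"
    and "y^2 + z^2 > 0"
    and "translation_curve_to X (x, y, z) tau u v"
  shows "(tau * fst (unit_tangent u v),
          tau * fst (snd (unit_tangent u v)),
          tau * snd (snd (unit_tangent u v))) =
         (ln (x^2 + pm X * (y^2 + z^2)) / 2,
          y * arcC X (x / sqrt (x^2 + pm X * (y^2 + z^2))) / sqrt (y^2 + z^2),
          z * arcC X (x / sqrt (x^2 + pm X * (y^2 + z^2))) / sqrt (y^2 + z^2))"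
proof -
  define a where "a = tau * sin v"
  define b where "b = tau * cos v"
  have adm: "admissible_params tau u v" and reach: "tcurve X tau u v = (x, y, z)"
    using assms(3) by (simp_all add: translation_curve_to_def)
  have b_range: "0 \<le> b" "X = S2R \<Longrightarrow> b \<le> pi"
    using admissible_params_cos_nonneg[OF adm] translation_curve_S2R_angle_le_pi assms(3)
    by (auto simp: b_def)
  have xyz: "x = exp a * C_fun X b" "y = exp a * S_fun X b * cos u" "z = exp a * S_fun X b * sin u"
    using reach by (simp_all add: tcurve_def a_def b_def)
  have Q: "x\<^sup>2 + pm X * (y\<^sup>2 + z\<^sup>2) = (exp a)\<^sup>2"
    using tcurve_quadratic_form[OF reach] by (simp add: a_def)
  have yz: "y\<^sup>2 + z\<^sup>2 = (exp a * S_fun X b)\<^sup>2"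
    using tcurve_sum_squares[OF reach] by (simp add: a_def b_def)
  have "0 < S_fun X b"
    using S_fun_nonneg[of b X, OF b_range] assms(2) yz by (auto simp: less_le)
  then have sqrt_yz: "sqrt (y\<^sup>2 + z\<^sup>2) = exp a * S_fun X b" by (simp add: yz)
  have arc: "arcC X (x / sqrt (x\<^sup>2 + pm X * (y\<^sup>2 + z\<^sup>2))) = b"
    unfolding Q using arcC_C_fun[of b X, OF b_range] by (simp add: xyz(1))
  have "ln (x\<^sup>2 + pm X * (y\<^sup>2 + z\<^sup>2)) / 2 = a" by (simp add: Q ln_realpow)
  with \<open>0 < S_fun X b\<close> show ?thesis
    unfolding arc sqrt_yz unit_tangent_def by (simp add: xyz(2,3) a_def b_def)
qed

end
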